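(* Let $\mathcal{G}^s$ be an SCG and consider the effect $P(y_t\mid \text{do}(x^1_{t-\gamma_1}),\dots,\text{do}(x^n_{t-\gamma_n}))$. The following are equivalent: 1. There exist an intervention $X^i_{t-\gamma_i}$ and a candidate FTCG $\mathcal{G}^f\in\mathcal{C}(\mathcal{G}^s)$ containing a directed path $X^i_{t-\gamma_i}\leftsquigarrow Y_t$ (from $Y_t$ to $X^i_{t-\gamma_i}$) which remains in $\mathcal{NC}\cup\{X^i_{t-\gamma_i}\}$. 2. There exists an intervention $X^i_{t-\gamma_i}$ with $\gamma_i=0$ and $X^i\in\text{Desc}(Y,\mathcal{G}^s_{|\mathcal{S}})$, where $\mathcal{S}:=\{S\in\mathcal{V}^s: t_{\mathcal{NC}}(S)\le t\}\cup\{X^j\in\mathcal{X}^s:\gamma_j=0\}$ and $\mathcal{G}^s_{|\mathcal{S}}$ is the subgraph of $\mathcal{G}^s$ induced by $\mathcal{S}$.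
   Context: Let $\mathcal{V}$ be a finite set of time series, $\mathcal{V}^f=\{X_s: X\in\mathcal{V},s\in\mathbb{Z}\}$. An FTCG is a DAG on $\mathcal{V}^f$ whose edges $X_s\to Z_{s'}$ satisfy $s\le s'$. The SCG reduced from an FTCG $\mathcal{G}^f$ is $\mathcal{G}^s=(\mathcal{V}^s,\mathcal{E}^s)$, $\mathcal{V}^s=\mathcal{V}$, with $X\to Z$ iff $\mathcal{G}^f$ has an edge $X_{s-\gamma}\to Z_s$ with $\gamma\ge0$. An SCG is a graph reduced from some FTCG; $\mathcal{C}(\mathcal{G}^s)$ is the class of candidate FTCGs (those from which $\mathcal{G}^s$ is reduced). Descendants are via directed paths (a vertex is its own descendant). A path from set $\mathbf{A}$ to $\mathbf{B}$ is proper if only its first vertex is in $\mathbf{A}$. A path remains in a set $S$ if all its vertices are in $S$. $\text{Forb}(\mathbf{X},\mathbf{Y},\mathcal{G})$ is the set of all descendants of any $W\notin\mathbf{X}$ lying on a proper directed path from $\mathbf{X}$ to $\mathbf{Y}$ in $\mathcal{G}$. Effect setup: fix $Y\in\mathcal{V}^s$, a time $t$, and interventions $X^1_{t-\gamma_1},\dots,X^n_{t-\gamma_n}$ (distinct vertices of $\mathcal{V}^f$), with standing assumptions $\gamma_i\ge0$ and $Y$ a descendant of every $X^i$ in $\mathcal{G}^s$. $\mathcal{X}^f=\{X^i_{t-\gamma_i}\}_i$, $\mathcal{X}^s=\{X^i\}_i$. $\mathcal{CF}=\bigcup_{\mathcal{G}^f\in\mathcal{C}(\mathcal{G}^s)}\text{Forb}(\mathcal{X}^f,Y_t,\mathcal{G}^f)$,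 $\mathcal{NC}=\mathcal{CF}\setminus\mathcal{X}^f$. For $F\in\mathcal{V}^s$, $t_{\mathcal{NC}}(F)=\min\{t_1:F_{t_1}\in\mathcal{NC}\}$ with $\min\emptyset=+\infty$. *)

theory Defs
  imports Main "HOL-Library.Extended_Real"
begin

text \<open>Time series are elements of type 'v; the finite set of series is V.
  Vertices of an FTCG are pairs (X, s) with s an integer time; edges are a relation.\<close>

type_synonym 'v fvertex = "'v \<times> int"

definition is_FTCG :: "'v set \<Rightarrow> ('v fvertex \<times> 'v fvertex) set \<Rightarrow> bool" where
  "is_FTCG V Ef \<longleftrightarrow>
     Ef \<subseteq> (V \<times> UNIV) \<times> (V \<times> UNIV) \<and>
     acyclic Ef \<and>
     (\<forall>X s Z s'. ((X, s), (Z, s')) \<in> Ef \<longrightarrow> s \<le> s')"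

definition reduced_SCG :: "('v fvertex \<times> 'v fvertex) set \<Rightarrow> ('v \<times> 'v) set" where
  "reduced_SCG Ef = {(X, Z). \<exists>s \<gamma>. \<gamma> \<ge> 0 \<and> ((X, s - \<gamma>), (Z, s)) \<in> Ef}"

definition is_SCG :: "'v set \<Rightarrow> ('v \<times> 'v) set \<Rightarrow> bool" where
  "is_SCG V Es \<longleftrightarrow> (\<exists>Ef. is_FTCG V Ef \<and> reduced_SCG Ef = Es)"

definition candidates :: "'v set \<Rightarrow> ('v \<times> 'v) set \<Rightarrow> ('v fvertex \<times> 'v fvertex) set set" where
  "candidates V Es = {Ef. is_FTCG V Ef \<and> reduced_SCG Ef = Es}"

definition dpath :: "('a \<times> 'a) set \<Rightarrow> 'a list \<Rightarrow> bool" where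
  "dpath E p \<longleftrightarrow> p \<noteq> [] \<and> (\<forall>i. Suc i < length p \<longrightarrow> (p ! i, p ! Suc i) \<in> E)"

definition proper_dpath :: "('a \<times> 'a) set \<Rightarrow> 'a set \<Rightarrow> 'a set \<Rightarrow> 'a list \<Rightarrow> bool" where
  "proper_dpath E A B p \<longleftrightarrow> dpath E p \<and> hd p \<in> A \<and> last p \<in> B \<and> (\<forall>v \<in> set (tl p). v \<notin> A)"

text \<open>Descendants via directed paths (a vertex is its own descendant).\<close>
definition desc :: "('a \<times> 'a) set \<Rightarrow> 'a \<Rightarrow> 'a set" where
  "desc E W = {D. \<exists>p. dpath E p \<and> hd p = W \<and> last p = D}"

definition Forb :: "'a set \<Rightarrow> 'a set \<Rightarrow> ('a \<times> 'a) set \<Rightarrow> 'a set" where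
  "Forb Xs Ys E = \<Union> {desc E W | W. W \<notin> Xs \<and> (\<exists>p. proper_dpath E Xs Ys p \<and> W \<in> set p)}"

definition CF :: "'v set \<Rightarrow> ('v \<times> 'v) set \<Rightarrow> 'v fvertex set \<Rightarrow> 'v \<Rightarrow> int \<Rightarrow> 'v fvertex set" where
  "CF V Es Xf Y t = (\<Union>Ef \<in> candidates V Es. Forb Xf {(Y, t)} Ef)"

definition NC :: "'v set \<Rightarrow> ('v \<times> 'v) set \<Rightarrow> 'v fvertex set \<Rightarrow> 'v \<Rightarrow> int \<Rightarrow> 'v fvertex set" where
  "NC V Es Xf Y t = CF V Es Xf Y t - Xf"

text \<open>t_NC(F) = min {t1. F_t1 \<in> NC}, with min of the empty set = +\<infinity>
  (rendered as the infimum in the extended reals).\<close>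
definition t_NC :: "'v fvertex set \<Rightarrow> 'v \<Rightarrow> ereal" where
  "t_NC N F = Inf (ereal ` of_int ` {t1. (F, t1) \<in> N})"

definition induced :: "('a \<times> 'a) set \<Rightarrow> 'a set \<Rightarrow> ('a \<times> 'a) set" where
  "induced E S = E \<inter> (S \<times> S)"

definition Sset :: "'v set \<Rightarrow> ('v \<times> 'v) set \<Rightarrow> 'v fvertex set \<Rightarrow> 'v \<Rightarrow> int \<Rightarrow> 'v set" where
  "Sset V Es Xf Y t =
     {S \<in> V. t_NC (NC V Es Xf Y t) S \<le> ereal (of_int t)} \<union> {X. (X, t) \<in> Xf}"

end

(* Along a directed path of a candidate FTCG time never decreases, so a path from Y_t to an
   intervention X^i_(t-gamma_i), gamma_i >= 0, stays at time t.  Its vertices other than the endpoint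
   lie in NC at time t, which puts their series in S, and projecting the path to the SCG gives a
   path from Y to X^i inside S.

   Conversely, take a path from Y to an intervention series in the SCG restricted to S that meets
   no other intervention at time t, and copy it to time t in a candidate whose remaining edges
   have lag one.  Each non-final series on it is in S without being an intervention at time t, so
   it has an NC vertex at some time <= t.  If NC has no vertex before t, these vertices are at
   time t.  Otherwise some candidate has a proper path from an intervention earlier than t into
   Y_t; pushing that path below time t and continuing it with the copy gives a candidate in which
   Y_t itself lies on a proper path from the interventions, so the whole copy consists of
   forbidden descendants of Y_t. *)

theory Submission
  imports Defs "HOL-Library.Product_Lexorder"
begin

section \<open>Directed paths\<close>

lemma dpath_singleton [simp]: "dpath E [x]"
  by (simp add: dpath_def)

lemma dpath_Cons_Cons [simp]: "dpath E (x # y # zs) \<longleftrightarrow> (x, y) \<in> E \<and> dpath E (y # zs)"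
  unfolding dpath_def by (auto simp: nth_Cons split: nat.splits)

lemma set_zip_tl: "set (zip p (tl p)) = {(p ! i, p ! Suc i) | i. Suc i < length p}"
  by (auto simp: set_zip nth_tl)

lemma dpath_iff_zip: "dpath E p \<longleftrightarrow> p \<noteq> [] \<and> set (zip p (tl p)) \<subseteq> E"
  unfolding dpath_def set_zip_tl by blast

lemma dpath_append: "dpath E (xs @ x # ys) \<longleftrightarrow> dpath E (xs @ [x]) \<and> dpath E (x # ys)"
  by (induction xs rule: induct_list012) auto

lemma dpath_snoc: "xs \<noteq> [] \<Longrightarrow> dpath E (xs @ [y]) \<longleftrightarrow> dpath E xs \<and> (last xs, y) \<in> E"
  by (induction xs rule: induct_list012) auto

lemma dpath_mono: "dpath E p \<Longrightarrow> E \<subseteq> E' \<Longrightarrow> dpath E' p"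
  unfolding dpath_def by auto

lemma dpath_map: "dpath E p \<Longrightarrow> (\<And>u v. (u, v) \<in> E \<Longrightarrow> (f u, f v) \<in> E') \<Longrightarrow> dpath E' (map f p)"
  unfolding dpath_def by auto

lemma dpath_set_subset:
  assumes "dpath E p" "E \<subseteq> UNIV \<times> S" "hd p \<in> S"
  shows "set p \<subseteq> S"
  using assms by (induction p rule: induct_list012) auto

lemma dpath_induced: "dpath E p \<Longrightarrow> set p \<subseteq> S \<Longrightarrow> dpath (induced E S) p"
  unfolding dpath_def induced_def by (auto dest: nth_mem)

lemma dpath_take: "dpath E p \<Longrightarrow> i < length p \<Longrightarrow> dpath E (take (Suc i) p)"
  unfolding dpath_def by auto

lemma mem_desc_hd:
  assumes "dpath E p" "v \<in> set p"
  shows "v \<in> desc E (hd p)"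
proof -
  obtain i where i: "i < length p" "v = p ! i"
    using assms(2) by (auto simp: in_set_conv_nth)
  then have "hd (take (Suc i) p) = hd p" "last (take (Suc i) p) = v"
    by (cases p, simp_all add: take_Suc_conv_app_nth)
  with dpath_take[OF assms(1) i(1)] show ?thesis
    unfolding desc_def by blast
qed

lemma distinct_last_notin_butlast: "distinct xs \<Longrightarrow> last xs \<notin> set (butlast xs)"
  by (cases xs rule: rev_cases) auto

lemma dpath_distinct_subpath:
  assumes "dpath E p"
  shows "\<exists>q. dpath E q \<and> distinct q \<and> hd q = hd p \<and> last q = last p \<and> set q \<subseteq> set p"
  using assms
proof (induction p rule: length_induct)
  case (1 p)
  show ?case
  proof (cases "distinct p")
    case True
    with "1.prems" show ?thesis by blast
  next
    case False
    then obtain xs y ys zs where p: "p = xs @ y # ys @ y # zs"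
      using not_distinct_decomp by fastforce
    have "dpath E (xs @ [y])" "dpath E ((y # ys) @ y # zs)"
      using "1.prems" p dpath_append[of E xs y "ys @ y # zs"] by simp_all
    then have "dpath E (xs @ y # zs)"
      using dpath_append[of E xs y zs] dpath_append[of E "y # ys" y zs] by blast
    moreover have "length (xs @ y # zs) < length p"
      using p by simp
    ultimately obtain q where "dpath E q" "distinct q" "hd q = hd (xs @ y # zs)"
      "last q = last (xs @ y # zs)" "set q \<subseteq> set (xs @ y # zs)"
      using "1.IH" by blast
    moreover have "set (xs @ y # zs) \<subseteq> set p" "hd (xs @ y # zs) = hd p"
      "last (xs @ y # zs) = last p"
      using p by (auto simp: hd_append)
    ultimately show ?thesis
      by (metis order_trans)
  qed
qed

lemma proper_dpath_subpath:
  assumes "dpath E p" "hd p \<in> A" "last p \<in> B"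
  shows "\<exists>q. proper_dpath E A B q \<and> distinct q \<and> set q \<subseteq> set p"
proof -
  have "p \<noteq> []"
    using assms(1) by (simp add: dpath_def)
  with assms(2) obtain ys x zs where p: "p = ys @ x # zs" "x \<in> A" "\<forall>z \<in> set zs. z \<notin> A"
    using split_list_last_propE[of p "\<lambda>v. v \<in> A"] hd_in_set by blast
  then have "dpath E (x # zs)"
    using assms(1) dpath_append[of E ys x zs] by simp
  then obtain q where q: "dpath E q" "distinct q" "hd q = x" "last q = last p" "set q \<subseteq> set (x # zs)"
    using dpath_distinct_subpath p(1) by fastforce
  have "v \<notin> A" if "v \<in> set (tl q)" for v
  proof -
    have "v \<noteq> x"
      using q(2,3) that by (cases q) auto
    moreover have "v \<in> set (x # zs)"
      using q(5) that list.set_sel(2)[of q] by (cases q) auto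
    ultimately show ?thesis
      using p(3) by auto
  qed
  then show ?thesis
    unfolding proper_dpath_def using q p assms(3) by auto
qed

lemma dpath_first_hit_subpath:
  assumes "dpath E p" "last p \<in> A"
  shows "\<exists>q. dpath E q \<and> distinct q \<and> hd q = hd p \<and> last q \<in> A \<and> set q \<subseteq> set p
    \<and> set (butlast q) \<inter> A = {}"
proof -
  have "p \<noteq> []"
    using assms(1) by (simp add: dpath_def)
  with assms(2) obtain ys x zs where p: "p = ys @ x # zs" "x \<in> A" "\<forall>y \<in> set ys. y \<notin> A"
    using split_list_first_propE[of p "\<lambda>v. v \<in> A"] last_in_set by blast
  then have "dpath E (ys @ [x])"
    using assms(1) dpath_append[of E ys x zs] by simp
  then obtain q where q: "dpath E q" "distinct q" "hd q = hd p" "last q = x" "set q \<subseteq> set (ys @ [x])"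
    using dpath_distinct_subpath p(1) by (fastforce simp: hd_append)
  have "v \<notin> A" if "v \<in> set (butlast q)" for v
  proof -
    have "v \<noteq> x"
      using distinct_last_notin_butlast[OF q(2)] q(4) that by blast
    moreover have "v \<in> set (ys @ [x])"
      using q(5) that in_set_butlastD by fast
    ultimately show ?thesis
      using p(3) by auto
  qed
  then show ?thesis
    using q p by auto
qed

section \<open>Candidate FTCGs\<close>

lemma SCG_subset: "is_SCG V Es \<Longrightarrow> Es \<subseteq> V \<times> V"
  unfolding is_SCG_def reduced_SCG_def is_FTCG_def by auto

definition compatible_edges :: "('v \<times> 'v) set \<Rightarrow> ('v fvertex \<times> 'v fvertex) set" where
  "compatible_edges Es = {(u, v). (fst u, fst v) \<in> Es \<and> snd u \<le> snd v}"

lemma candidate_subset_compatible: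
  assumes "Ef \<in> candidates V Es"
  shows "Ef \<subseteq> compatible_edges Es"
proof
  fix e assume "e \<in> Ef"
  then obtain X s Z s' where e: "e = ((X, s), (Z, s'))" "((X, s), (Z, s')) \<in> Ef"
    by (metis prod.collapse)
  then have "s \<le> s'"
    using assms unfolding candidates_def is_FTCG_def by blast
  then have "0 \<le> s' - s" "((X, s' - (s' - s)), (Z, s')) \<in> Ef"
    using e(2) by simp_all
  then have "(X, Z) \<in> reduced_SCG Ef"
    unfolding reduced_SCG_def by blast
  then show "e \<in> compatible_edges Es"
    using assms \<open>s \<le> s'\<close> e(1) unfolding candidates_def compatible_edges_def by auto
qed

lemma compatible_path_sorted: "dpath (compatible_edges Es) p \<Longrightarrow> sorted (map snd p)"
  by (induction p rule: induct_list012) (auto simp: compatible_edges_def)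

lemma compatible_path_time_bounds:
  assumes "dpath (compatible_edges Es) p" "v \<in> set p"
  shows "snd (hd p) \<le> snd v \<and> snd v \<le> snd (last p)"
proof -
  have sorted: "sorted (map snd p)"
    using assms(1) by (rule compatible_path_sorted)
  have "snd (hd p) \<le> snd v"
    using assms(2) sorted by (cases p) auto
  moreover have "snd v \<le> snd (last p)"
    using assms(2) sorted by (cases p rule: rev_cases) (auto simp: sorted_append)
  ultimately show ?thesis ..
qed

lemma compatible_path_project: "dpath (compatible_edges Es) p \<Longrightarrow> dpath Es (map fst p)"
  by (erule dpath_map) (simp add: compatible_edges_def)

lemma compatible_path_at_time: "dpath Es p \<Longrightarrow> dpath (compatible_edges Es) (map (\<lambda>c. (c, t)) p)"
  by (erule dpath_map) (simp add: compatible_edges_def)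

lemma compatible_path_clamp:
  "dpath (compatible_edges Es) p \<Longrightarrow>
    dpath (compatible_edges Es) (map (\<lambda>v. (fst v, min (snd v) c)) p)"
  by (erule dpath_map) (auto simp: compatible_edges_def)

definition lag_edges :: "('v \<times> 'v) set \<Rightarrow> ('v fvertex \<times> 'v fvertex) set" where
  "lag_edges Es = {((A, s), (B, s + 1)) | A B s. (A, B) \<in> Es}"

lemma distinct_compatible_path_in_candidate:
  assumes Es: "Es \<subseteq> V \<times> V" and l: "distinct l" "dpath (compatible_edges Es) l"
  shows "\<exists>Ef \<in> candidates V Es. dpath Ef l"
proof -
  define Ef where "Ef = lag_edges Es \<union> set (zip l (tl l))"
  define rank where "rank v = (snd v, the_inv_into {..<length l} ((!) l) v)" for v
  have compat: "Ef \<subseteq> compatible_edges Es"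
    using l(2) unfolding Ef_def lag_edges_def compatible_edges_def dpath_iff_zip by auto
  have "rank u < rank v" if "(u, v) \<in> Ef" for u v
    using that unfolding Ef_def
  proof
    assume "(u, v) \<in> set (zip l (tl l))"
    then obtain i where i: "Suc i < length l" "u = l ! i" "v = l ! Suc i"
      unfolding set_zip_tl by blast
    have "inj_on ((!) l) {..<length l}"
      using l(1) by (simp add: inj_on_nth)
    then have "the_inv_into {..<length l} ((!) l) u = i" "the_inv_into {..<length l} ((!) l) v = Suc i"
      using i by (simp_all add: the_inv_into_f_f)
    moreover have "snd u \<le> snd v"
      using compat \<open>(u, v) \<in> Ef\<close> by (auto simp: compatible_edges_def)
    ultimately show ?thesis
      by (auto simp: rank_def less_prod_def')
  qed (auto simp: lag_edges_def rank_def)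
  then have "acyclic Ef"
    using acyclicI_order[of "Ef\<inverse>" rank] by simp
  moreover have "Ef \<subseteq> (V \<times> UNIV) \<times> (V \<times> UNIV)"
    using compat Es by (auto simp: compatible_edges_def)
  moreover have "reduced_SCG Ef = Es"
  proof
    show "reduced_SCG Ef \<subseteq> Es"
      using compat by (auto simp: reduced_SCG_def compatible_edges_def)
    have "((A, 1 - 1), (B, 1)) \<in> Ef" if "(A, B) \<in> Es" for A B
      using that unfolding Ef_def lag_edges_def by force
    then show "Es \<subseteq> reduced_SCG Ef"
      unfolding reduced_SCG_def by (force intro: exI[of _ 1])
  qed
  ultimately have "Ef \<in> candidates V Es"
    using compat by (auto simp: candidates_def is_FTCG_def compatible_edges_def)
  moreover have "dpath Ef l"
    using l(2) by (auto simp: Ef_def dpath_iff_zip)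
  ultimately show ?thesis
    by blast
qed

section \<open>Forbidden vertices\<close>

lemma t_NC_le_iff: "t_NC N c \<le> ereal (of_int t) \<longleftrightarrow> (\<exists>t1 \<le> t. (c, t1) \<in> N)"
proof
  assume "t_NC N c \<le> ereal (of_int t)"
  show "\<exists>t1 \<le> t. (c, t1) \<in> N"
  proof (rule ccontr)
    assume none: "\<not> (\<exists>t1 \<le> t. (c, t1) \<in> N)"
    have "ereal (of_int (t + 1)) \<le> ereal (of_int t1)" if "(c, t1) \<in> N" for t1
    proof -
      have "\<not> t1 \<le> t"
        using none that by blast
      then have "t + 1 \<le> t1"
        by simp
      then show ?thesis
        by (simp only: ereal_less_eq(3) of_int_le_iff)
    qed
    then have "ereal (of_int (t + 1)) \<le> t_NC N c"
      unfolding t_NC_def by (auto intro!: Inf_greatest)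
    from this \<open>t_NC N c \<le> ereal (of_int t)\<close> have "ereal (of_int (t + 1)) \<le> ereal (of_int t)"
      by (rule order_trans)
    then show False
      by simp
  qed
next
  assume "\<exists>t1 \<le> t. (c, t1) \<in> N"
  then obtain t1 where "t1 \<le> t" "(c, t1) \<in> N"
    by blast
  then have "t_NC N c \<le> ereal (of_int t1)"
    unfolding t_NC_def by (auto intro!: Inf_lower)
  with \<open>t1 \<le> t\<close> show "t_NC N c \<le> ereal (of_int t)"
    by (simp add: order_trans)
qed

lemma mem_Sset_iff:
  "c \<in> Sset V Es Xf Y t \<longleftrightarrow>
    c \<in> V \<and> (\<exists>t1 \<le> t. (c, t1) \<in> NC V Es Xf Y t) \<or> (c, t) \<in> Xf"
  by (auto simp: Sset_def t_NC_le_iff)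

lemma desc_subset_Forb: "proper_dpath E A B p \<Longrightarrow> W \<in> set p \<Longrightarrow> W \<notin> A \<Longrightarrow> desc E W \<subseteq> Forb A B E"
  unfolding Forb_def by blast

lemma proper_compatible_path_below:
  assumes \<pi>: "proper_dpath (compatible_edges Es) A {(Y, t)} \<pi>" and early: "snd (hd \<pi>) < t"
  shows "\<exists>q. proper_dpath (compatible_edges Es) A {(Y, t)} q \<and> distinct q
    \<and> (\<forall>v \<in> set (butlast q). snd v < t)"
proof -
  have \<pi>_ends: "\<pi> \<noteq> []" "hd \<pi> \<in> A" "last \<pi> = (Y, t)"
    using \<pi> by (simp_all add: proper_dpath_def dpath_def)
  have \<pi>_split: "\<pi> = butlast \<pi> @ [(Y, t)]"
    using append_butlast_last_id[OF \<pi>_ends(1)] unfolding \<pi>_ends(3) by (rule sym)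
  have "butlast \<pi> \<noteq> []"
  proof
    assume "butlast \<pi> = []"
    then have "\<pi> = [(Y, t)]"
      using \<pi>_split by simp
    with early show False
      by simp
  qed
  then obtain \<pi>' where \<pi>': "\<pi> = \<pi>' @ [(Y, t)]" "\<pi>' \<noteq> []"
    using \<pi>_split by blast
  have \<pi>'_path: "dpath (compatible_edges Es) \<pi>' \<and> (last \<pi>', (Y, t)) \<in> compatible_edges Es"
    using \<pi> \<pi>'(1) dpath_snoc[OF \<pi>'(2)] by (simp add: proper_dpath_def)
  \<comment> \<open>Clamping at time t - 1 keeps the path compatible and fixes its start, which is earlier than t.\<close>
  define clamp where "clamp v = (fst v, min (snd v) (t - 1))" for v :: "'a fvertex"
  have "dpath (compatible_edges Es) (map clamp \<pi>')"
    using \<pi>'_path unfolding clamp_def by (blast intro: compatible_path_clamp)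
  moreover have "(last (map clamp \<pi>'), (Y, t)) \<in> compatible_edges Es"
    using \<pi>'_path \<pi>'(2) by (simp add: clamp_def compatible_edges_def last_map)
  ultimately have path: "dpath (compatible_edges Es) (map clamp \<pi>' @ [(Y, t)])"
    using dpath_snoc[of "map clamp \<pi>'"] \<pi>'(2) by simp
  have "hd (map clamp \<pi>' @ [(Y, t)]) = hd \<pi>"
    using \<pi>' early by (simp add: clamp_def hd_map)
  then have "hd (map clamp \<pi>' @ [(Y, t)]) \<in> A"
    using \<pi>_ends(2) by simp
  moreover have "last (map clamp \<pi>' @ [(Y, t)]) \<in> {(Y, t)}"
    by simp
  ultimately obtain q where q: "proper_dpath (compatible_edges Es) A {(Y, t)} q" "distinct q"
    "set q \<subseteq> set (map clamp \<pi>' @ [(Y, t)])"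
    using proper_dpath_subpath[OF path] by blast
  have "snd v < t" if "v \<in> set (butlast q)" for v
  proof -
    have "v \<noteq> (Y, t)"
      using distinct_last_notin_butlast[OF q(2)] q(1) that by (auto simp: proper_dpath_def)
    then have "v \<in> clamp ` set \<pi>'"
      using q(3) in_set_butlastD[OF that] by auto
    then show ?thesis
      by (auto simp: clamp_def)
  qed
  with q show ?thesis
    by blast
qed

lemma proper_path_to_outcome_if_early_NC:
  assumes "(F, t1) \<in> NC V Es Xf Y t" "t1 < t"
  shows "\<exists>q. proper_dpath (compatible_edges Es) Xf {(Y, t)} q \<and> distinct q
    \<and> (\<forall>v \<in> set (butlast q). snd v < t)"
proof -
  obtain Ef W \<pi> where Ef: "Ef \<in> candidates V Es" and W: "W \<in> set \<pi>" "(F, t1) \<in> desc Ef W"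
    and \<pi>: "proper_dpath Ef Xf {(Y, t)} \<pi>"
    using assms(1) unfolding NC_def CF_def Forb_def by blast
  have compat: "Ef \<subseteq> compatible_edges Es"
    using Ef by (rule candidate_subset_compatible)
  obtain \<sigma> where \<sigma>: "dpath Ef \<sigma>" "hd \<sigma> = W" "last \<sigma> = (F, t1)"
    using W(2) unfolding desc_def by blast
  then have "\<sigma> \<noteq> []"
    by (simp add: dpath_def)
  then have "snd W \<le> t1"
    using compatible_path_time_bounds[OF dpath_mono[OF \<sigma>(1) compat] last_in_set] \<sigma> by simp
  have "proper_dpath (compatible_edges Es) Xf {(Y, t)} \<pi>"
    using \<pi> compat dpath_mono unfolding proper_dpath_def by blast
  moreover have "snd (hd \<pi>) < t"
    using compatible_path_time_bounds[OF _ W(1)] calculation \<open>snd W \<le> t1\<close> assms(2)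
    by (force simp: proper_dpath_def)
  ultimately show ?thesis
    by (rule proper_compatible_path_below)
qed

lemma CF_along_path_if_early_NC:
  assumes Es: "Es \<subseteq> V \<times> V" and early: "(F, t1) \<in> NC V Es Xf Y t" "t1 < t"
    and \<rho>: "dpath Es \<rho>" "distinct \<rho>" "hd \<rho> = Y" "c \<in> set \<rho>" and Y: "(Y, t) \<notin> Xf"
  shows "(c, t) \<in> CF V Es Xf Y t"
proof -
  obtain q where q: "proper_dpath (compatible_edges Es) Xf {(Y, t)} q" "distinct q"
    "\<forall>v \<in> set (butlast q). snd v < t"
    using proper_path_to_outcome_if_early_NC[OF early] by blast
  have "q \<noteq> []" "last q = (Y, t)"
    using q(1) by (simp_all add: proper_dpath_def dpath_def)
  then obtain q' where q': "q = q' @ [(Y, t)]"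
    using append_butlast_last_id by metis
  define \<rho>t where "\<rho>t = map (\<lambda>c. (c, t)) \<rho>"
  obtain \<rho>' where \<rho>': "\<rho>t = (Y, t) # \<rho>'"
    using \<rho>(3,4) unfolding \<rho>t_def by (cases \<rho>) auto
  have \<rho>t_path: "dpath (compatible_edges Es) \<rho>t"
    unfolding \<rho>t_def using \<rho>(1) by (rule compatible_path_at_time)
  have \<rho>t_distinct: "distinct \<rho>t"
    unfolding \<rho>t_def using \<rho>(2) by (simp add: distinct_map inj_on_def)
  have "set q' \<inter> set \<rho>t = {}"
    using q(3) q' unfolding \<rho>t_def by force
  then have "distinct (q' @ (Y, t) # \<rho>')"
    using q(2) \<rho>t_distinct unfolding q' \<rho>' by auto
  moreover have "dpath (compatible_edges Es) (q' @ (Y, t) # \<rho>')"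
    using q(1) \<rho>t_path unfolding proper_dpath_def q' \<rho>'
    by (simp add: dpath_append[of _ q' "(Y, t)" \<rho>'])
  \<comment> \<open>In this candidate Y_t lies on the proper path q, so everything downstream of it is forbidden.\<close>
  ultimately obtain Ef where Ef: "Ef \<in> candidates V Es" "dpath Ef (q' @ (Y, t) # \<rho>')"
    using distinct_compatible_path_in_candidate[OF Es] by blast
  then have "dpath Ef q" "dpath Ef \<rho>t"
    unfolding q' \<rho>' by (simp_all add: dpath_append[of _ q' "(Y, t)" \<rho>'])
  then have "proper_dpath Ef Xf {(Y, t)} q"
    using q(1) by (simp add: proper_dpath_def)
  moreover have "(Y, t) \<in> set q"
    by (simp add: q')
  ultimately have "desc Ef (Y, t) \<subseteq> Forb Xf {(Y, t)} Ef"
    using Y by (rule desc_subset_Forb)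
  moreover have "(c, t) \<in> set \<rho>t"
    unfolding \<rho>t_def using \<rho>(4) by simp
  then have "(c, t) \<in> desc Ef (Y, t)"
    using mem_desc_hd[OF \<open>dpath Ef \<rho>t\<close>] \<rho>' by fastforce
  ultimately show ?thesis
    using Ef(1) unfolding CF_def by blast
qed

lemma NC_along_Sset_path:
  assumes Es: "Es \<subseteq> V \<times> V"
    and \<rho>: "dpath Es \<rho>" "distinct \<rho>" "hd \<rho> = Y" "set \<rho> \<subseteq> Sset V Es Xf Y t"
    and not_X: "\<forall>c \<in> set (butlast \<rho>). (c, t) \<notin> Xf" and c: "c \<in> set (butlast \<rho>)"
  shows "(c, t) \<in> NC V Es Xf Y t"
proof (cases "\<exists>(F, t1) \<in> NC V Es Xf Y t. t1 < t")
  case True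
  then obtain F t1 where early: "(F, t1) \<in> NC V Es Xf Y t" "t1 < t"
    by blast
  have "butlast \<rho> \<noteq> []"
    using c by auto
  then have "hd \<rho> \<in> set (butlast \<rho>)"
    by (metis append_butlast_last_id hd_append2 hd_in_set butlast.simps(1))
  then have "(Y, t) \<notin> Xf"
    using not_X \<rho>(3) by blast
  then have "(c, t) \<in> CF V Es Xf Y t"
    using CF_along_path_if_early_NC[OF Es early \<rho>(1-3) in_set_butlastD[OF c]] by blast
  then show ?thesis
    using not_X c by (simp add: NC_def)
next
  case False
  have "c \<in> Sset V Es Xf Y t" "(c, t) \<notin> Xf"
    using \<rho>(4) not_X c in_set_butlastD by fast+
  then obtain t1 where "t1 \<le> t" "(c, t1) \<in> NC V Es Xf Y t"
    unfolding mem_Sset_iff by blast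
  moreover from this False have "t \<le> t1"
    by fastforce
  ultimately show ?thesis
    by simp
qed

lemma Sset_reach_imp_NC_path:
  assumes SCG: "is_SCG V Es" and Xi: "(Xi, t) \<in> Xf" and Y: "Y \<in> Sset V Es Xf Y t"
    and reach: "Xi \<in> desc (induced Es (Sset V Es Xf Y t)) Y"
  shows "\<exists>(Xi, si) \<in> Xf. \<exists>Ef \<in> candidates V Es. \<exists>p.
    dpath Ef p \<and> hd p = (Y, t) \<and> last p = (Xi, si) \<and> set p \<subseteq> NC V Es Xf Y t \<union> {(Xi, si)}"
proof -
  let ?S = "Sset V Es Xf Y t"
  have Es: "Es \<subseteq> V \<times> V"
    using SCG by (rule SCG_subset)
  obtain p where p: "dpath (induced Es ?S) p" "hd p = Y" "last p = Xi"
    using reach unfolding desc_def by blast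
  have "set p \<subseteq> ?S"
    using dpath_set_subset[OF p(1)] Y p(2) by (auto simp: induced_def)
  obtain \<rho> where \<rho>: "dpath (induced Es ?S) \<rho>" "distinct \<rho>" "hd \<rho> = Y" "(last \<rho>, t) \<in> Xf"
    "set \<rho> \<subseteq> set p" "set (butlast \<rho>) \<inter> {c. (c, t) \<in> Xf} = {}"
    using dpath_first_hit_subpath[OF p(1), of "{c. (c, t) \<in> Xf}"] p(2,3) Xi by auto
  have \<rho>_Es: "dpath Es \<rho>"
    using \<rho>(1) by (rule dpath_mono) (simp add: induced_def)
  define \<rho>t where "\<rho>t = map (\<lambda>c. (c, t)) \<rho>"
  have "set \<rho>t \<subseteq> NC V Es Xf Y t \<union> {(last \<rho>, t)}"
  proof
    fix v assume "v \<in> set \<rho>t"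
    then obtain c where c: "v = (c, t)" "c \<in> set \<rho>"
      unfolding \<rho>t_def by auto
    have "c = last \<rho> \<or> c \<in> set (butlast \<rho>)"
      using c(2) by (cases \<rho> rule: rev_cases) auto
    then show "v \<in> NC V Es Xf Y t \<union> {(last \<rho>, t)}"
      using NC_along_Sset_path[OF Es \<rho>_Es \<rho>(2,3)] \<rho>(5,6) \<open>set p \<subseteq> ?S\<close> c(1) by blast
  qed
  moreover have "distinct \<rho>t"
    unfolding \<rho>t_def using \<rho>(2) by (simp add: distinct_map inj_on_def)
  moreover have "dpath (compatible_edges Es) \<rho>t"
    unfolding \<rho>t_def using \<rho>_Es by (rule compatible_path_at_time)
  moreover have "hd \<rho>t = (Y, t)" "last \<rho>t = (last \<rho>, t)"
    using \<rho>(1,3) unfolding \<rho>t_def by (simp_all add: dpath_def hd_map last_map)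
  ultimately show ?thesis
    using distinct_compatible_path_in_candidate[OF Es] \<rho>(4) by blast
qed

lemma NC_path_imp_Sset_reach:
  assumes SCG: "is_SCG V Es" and "Y \<in> V" and Xi: "(Xi, si) \<in> Xf" "si \<le> t"
    and Ef: "Ef \<in> candidates V Es"
    and p: "dpath Ef p" "hd p = (Y, t)" "last p = (Xi, si)" "set p \<subseteq> NC V Es Xf Y t \<union> {(Xi, si)}"
  shows "(Xi, t) \<in> Xf \<and> Y \<in> Sset V Es Xf Y t \<and> Xi \<in> desc (induced Es (Sset V Es Xf Y t)) Y"
proof -
  let ?S = "Sset V Es Xf Y t"
  have p_compat: "dpath (compatible_edges Es) p"
    using p(1) candidate_subset_compatible[OF Ef] by (rule dpath_mono)
  have time: "snd v = t" if "v \<in> set p" for v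
    using compatible_path_time_bounds[OF p_compat that] p(2,3) Xi(2) by simp
  have "p \<noteq> []"
    using p(1) by (simp add: dpath_def)
  then have "si = t"
    using time[OF last_in_set] p(3) by simp
  let ?P = "map fst p"
  have P: "dpath Es ?P" "hd ?P = Y" "last ?P = Xi"
    using compatible_path_project[OF p_compat] p(2,3) \<open>p \<noteq> []\<close> by (simp_all add: hd_map last_map)
  have "set ?P \<subseteq> V"
    using dpath_set_subset[OF P(1)] SCG_subset[OF SCG] P(2) \<open>Y \<in> V\<close> by blast
  have "set ?P \<subseteq> ?S"
  proof
    fix c assume "c \<in> set ?P"
    then obtain v where v: "v \<in> set p" "c = fst v"
      by auto
    then have "v = (c, t)"
      using time by (metis prod.collapse)
    then show "c \<in> ?S"
      using v p(4) \<open>si = t\<close> Xi(1) \<open>set ?P \<subseteq> V\<close> \<open>c \<in> set ?P\<close> unfolding mem_Sset_iff by blast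
  qed
  then have "Xi \<in> desc (induced Es ?S) Y"
    using dpath_induced[OF P(1)] P(2,3) unfolding desc_def by blast
  moreover have "Y \<in> ?S"
    using \<open>set ?P \<subseteq> ?S\<close> P(2) \<open>p \<noteq> []\<close> by (metis hd_in_set list.map_disc_iff subsetD)
  ultimately show ?thesis
    using Xi(1) \<open>si = t\<close> by blast
qed

theorem lemma2:
  fixes V :: "'v set" and Es :: "('v \<times> 'v) set" and Xf :: "('v \<times> int) set"
    and Y :: 'v and t :: int
  assumes "finite V"
    and "is_SCG V Es"
    and "Y \<in> V"
    and "finite Xf"
    and "\<forall>(X, s) \<in> Xf. X \<in> V \<and> s \<le> t \<and> Y \<in> desc Es X"
  shows "(\<exists>(Xi, si) \<in> Xf. \<exists>Ef \<in> candidates V Es. \<exists>p.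
            dpath Ef p \<and> hd p = (Y, t) \<and> last p = (Xi, si) \<and>
            set p \<subseteq> NC V Es Xf Y t \<union> {(Xi, si)})
     \<longleftrightarrow>
         (\<exists>Xi. (Xi, t) \<in> Xf \<and>
            Y \<in> Sset V Es Xf Y t \<and>
            Xi \<in> desc (induced Es (Sset V Es Xf Y t)) Y)"
proof
  assume "\<exists>(Xi, si) \<in> Xf. \<exists>Ef \<in> candidates V Es. \<exists>p.
    dpath Ef p \<and> hd p = (Y, t) \<and> last p = (Xi, si) \<and> set p \<subseteq> NC V Es Xf Y t \<union> {(Xi, si)}"
  then obtain Xi si Ef p where "(Xi, si) \<in> Xf" "Ef \<in> candidates V Es" "dpath Ef p"
    "hd p = (Y, t)" "last p = (Xi, si)" "set p \<subseteq> NC V Es Xf Y t \<union> {(Xi, si)}"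
    by blast
  moreover have "si \<le> t"
    using assms(5) \<open>(Xi, si) \<in> Xf\<close> by blast
  ultimately show "\<exists>Xi. (Xi, t) \<in> Xf \<and> Y \<in> Sset V Es Xf Y t \<and>
    Xi \<in> desc (induced Es (Sset V Es Xf Y t)) Y"
    using NC_path_imp_Sset_reach[OF assms(2,3)] by blast
next
  assume "\<exists>Xi. (Xi, t) \<in> Xf \<and> Y \<in> Sset V Es Xf Y t \<and>
    Xi \<in> desc (induced Es (Sset V Es Xf Y t)) Y"
  then show "\<exists>(Xi, si) \<in> Xf. \<exists>Ef \<in> candidates V Es. \<exists>p.
    dpath Ef p \<and> hd p = (Y, t) \<and> last p = (Xi, si) \<and> set p \<subseteq> NC V Es Xf Y t \<union> {(Xi, si)}"
    using Sset_reach_imp_NC_path[OF assms(2)] by blast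
qed

end
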